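(* Let $P$ be a finite graded poset with $\hat0$ and let $\lambda$ be an ER-labeling of $P$ satisfying the rank two switching property, the braid relation and the cancellative property. Then the edge labeling $\lambda^*$ of $Q_\lambda(P)$ defined by $\lambda^*(X\lessdot Y)=S(Y)\setminus S(X)$ is an ER$^*$-labeling, i.e., every closed interval of $Q_\lambda(P)$ has exactly one ascent-free maximal chain.
   Context: An E-labeling is a map $\lambda$ from the cover relations of $P$ to a poset $\Lambda$. The word of labels of a saturated chain $x_0\lessdot\cdots\lessdot x_\ell$ is $\lambda(x_0\lessdot x_1)\cdots\lambda(x_{\ell-1}\lessdot x_\ell)$; the chain is increasing if the word is strictly increasing, ascent-free if no $i$ has $\lambda(x_{i-1}\lessdot x_i)<\lambda(x_i\lessdot x_{i+1})$. ER-labeling: every closed interval has exactly one increasing maximal chain. Rank two switching property: for every saturated chain $\hat0=x_0\lessdot\cdots\lessdot x_k$ and every $i$ with $\lambda(x_{i-1}\lessdot x_i)<\lambda(x_i\lessdot x_{i+1})$ there is a unique $x_i'$ with $x_{i-1}\lessdot x_i'\lessdot x_{i+1}$, $\lambda(x_{i-1}\lessdot x_i')=\lambda(x_i\lessdot x_{i+1})$, $\lambda(x_i'\lessdot x_{i+1})=\lambda(x_{i-1}\lessdot x_i)$. Quadratic exchange: for a maximal chain $\mathbf c$ of an interval with an ascent at position $i$, $U_i(\mathbf c)$ replaces $x_i$ by $x_i'$; otherwise $U_i(\mathbf c)=\mathbf c$. For maximal chains $\mathbf c_1,\mathbf c_2$ of an interval $[x,y]$ write $\mathbf c_1\sim_\lambda\mathbf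 c_2$ if they are connected by a sequence of quadratic exchanges (applied forwards or backwards) within $[x,y]$. Braid relation: for every maximal chain $\mathbf c$ of any interval with three strictly increasing consecutive labels at positions $i,i+1,i+2$, $U_iU_{i+1}U_i(\mathbf c)=U_{i+1}U_iU_{i+1}(\mathbf c)$. Cancellative property: for all $z<x<y$ in $P$, every maximal chain $\mathbf c$ of $[z,x]$ and maximal chains $\mathbf c_1,\mathbf c_2$ of $[x,y]$, $\mathbf c\cup\mathbf c_1\sim_\lambda\mathbf c\cup\mathbf c_2$ (in $[z,y]$) implies $\mathbf c_1\sim_\lambda\mathbf c_2$ (in $[x,y]$). $Q_\lambda(P)$: $C(P)$ is the set of saturated chains of $P$ starting at $\hat0$ ordered by inclusion; $e(\mathbf c)$ is the top element of $\mathbf c$. For $\mathbf c_1,\mathbf c_2\in C(P)$, $\mathbf c_1\sim\mathbf c_2$ iff $e(\mathbf c_1)=e(\mathbf c_2)=y$ and $\mathbf c_1\sim_\lambda\mathbf c_2$ in $[\hat0,y]$. $Q_\lambda(P)$ is the set of classes ordered by the transitive closure of: $X\le Y$ if some $\mathbf c\in X$, $\mathbf d\in Y$ satisfy $\mathbf c\subseteq\mathbf d$. All chains in a class $X$ have the same multiset $S(X)$ of labels (the multiset of labels of its cover relations), and if $X\lessdot Y$ then $S(Y)\setminus S(X)$ (multiset difference) consists of a single label. *)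

theory Defs
  imports Main "HOL-Library.Multiset"
begin

definition is_poset :: "'a set \<Rightarrow> ('a \<Rightarrow> 'a \<Rightarrow> bool) \<Rightarrow> bool" where
  "is_poset A le \<longleftrightarrow>
     (\<forall>x\<in>A. le x x) \<and>
     (\<forall>x\<in>A. \<forall>y\<in>A. le x y \<and> le y x \<longrightarrow> x = y) \<and>
     (\<forall>x\<in>A. \<forall>y\<in>A. \<forall>z\<in>A. le x y \<and> le y z \<longrightarrow> le x z)"

definition pcover :: "'a set \<Rightarrow> ('a \<Rightarrow> 'a \<Rightarrow> bool) \<Rightarrow> 'a \<Rightarrow> 'a \<Rightarrow> bool" where
  "pcover A le x y \<longleftrightarrow> x \<in> A \<and> y \<in> A \<and> le x y \<and> x \<noteq> y \<and>
     \<not> (\<exists>z\<in>A. le x z \<and> le z y \<and> z \<noteq> x \<and> z \<noteq> y)"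

definition graded_with_bot :: "'a set \<Rightarrow> ('a \<Rightarrow> 'a \<Rightarrow> bool) \<Rightarrow> 'a \<Rightarrow> bool" where
  "graded_with_bot A le z \<longleftrightarrow> z \<in> A \<and> (\<forall>x\<in>A. le z x) \<and>
     (\<exists>\<rho> :: 'a \<Rightarrow> nat. \<rho> z = 0 \<and> (\<forall>x y. pcover A le x y \<longrightarrow> \<rho> y = Suc (\<rho> x)))"

definition sat_chain :: "'a set \<Rightarrow> ('a \<Rightarrow> 'a \<Rightarrow> bool) \<Rightarrow> 'a list \<Rightarrow> bool" where
  "sat_chain A le c \<longleftrightarrow> c \<noteq> [] \<and> set c \<subseteq> A \<and>
     (\<forall>i. Suc i < length c \<longrightarrow> pcover A le (c ! i) (c ! Suc i))"

text \<open>Maximal chains of the closed interval [x,y] (in a finite poset = saturated chains from x to y).\<close>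
definition maxchain :: "'a set \<Rightarrow> ('a \<Rightarrow> 'a \<Rightarrow> bool) \<Rightarrow> 'a \<Rightarrow> 'a \<Rightarrow> 'a list \<Rightarrow> bool" where
  "maxchain A le x y c \<longleftrightarrow> sat_chain A le c \<and> hd c = x \<and> last c = y"

definition label_word :: "('a \<Rightarrow> 'a \<Rightarrow> 'l) \<Rightarrow> 'a list \<Rightarrow> 'l list" where
  "label_word lab c = map (\<lambda>(a, b). lab a b) (zip c (tl c))"

definition increasing :: "'l::order list \<Rightarrow> bool" where
  "increasing w \<longleftrightarrow> (\<forall>i. Suc i < length w \<longrightarrow> w ! i < w ! Suc i)"

definition ascent_free :: "'l::order list \<Rightarrow> bool" where
  "ascent_free w \<longleftrightarrow> (\<forall>i. Suc i < length w \<longrightarrow> \<not> (w ! i < w ! Suc i))"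

definition ER_labeling :: "'a set \<Rightarrow> ('a \<Rightarrow> 'a \<Rightarrow> bool) \<Rightarrow> ('a \<Rightarrow> 'a \<Rightarrow> 'l::order) \<Rightarrow> bool" where
  "ER_labeling A le lab \<longleftrightarrow> (\<forall>x\<in>A. \<forall>y\<in>A. le x y \<longrightarrow>
     (\<exists>!c. maxchain A le x y c \<and> increasing (label_word lab c)))"

definition ERstar_labeling :: "'a set \<Rightarrow> ('a \<Rightarrow> 'a \<Rightarrow> bool) \<Rightarrow> ('a \<Rightarrow> 'a \<Rightarrow> 'l::order) \<Rightarrow> bool" where
  "ERstar_labeling A le lab \<longleftrightarrow> (\<forall>x\<in>A. \<forall>y\<in>A. le x y \<longrightarrow>
     (\<exists>!c. maxchain A le x y c \<and> ascent_free (label_word lab c)))"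

text \<open>Rank two switching property (list index i is the element x_i; ascent at position i).\<close>
definition rank_two_switching :: "'a set \<Rightarrow> ('a \<Rightarrow> 'a \<Rightarrow> bool) \<Rightarrow> 'a \<Rightarrow> ('a \<Rightarrow> 'a \<Rightarrow> 'l::order) \<Rightarrow> bool" where
  "rank_two_switching A le z lab \<longleftrightarrow> (\<forall>c i. sat_chain A le c \<and> hd c = z \<and> 0 < i \<and> Suc i < length c \<and>
      lab (c ! (i - 1)) (c ! i) < lab (c ! i) (c ! Suc i) \<longrightarrow>
      (\<exists>!x'. pcover A le (c ! (i - 1)) x' \<and> pcover A le x' (c ! Suc i) \<and>
             lab (c ! (i - 1)) x' = lab (c ! i) (c ! Suc i) \<and>
             lab x' (c ! Suc i) = lab (c ! (i - 1)) (c ! i)))"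

definition switch_elem :: "'a set \<Rightarrow> ('a \<Rightarrow> 'a \<Rightarrow> bool) \<Rightarrow> ('a \<Rightarrow> 'a \<Rightarrow> 'l) \<Rightarrow> 'a \<Rightarrow> 'a \<Rightarrow> 'a \<Rightarrow> 'a" where
  "switch_elem A le lab a b d = (THE x'. pcover A le a x' \<and> pcover A le x' d \<and>
      lab a x' = lab b d \<and> lab x' d = lab a b)"

definition qexch :: "'a set \<Rightarrow> ('a \<Rightarrow> 'a \<Rightarrow> bool) \<Rightarrow> ('a \<Rightarrow> 'a \<Rightarrow> 'l::order) \<Rightarrow> nat \<Rightarrow> 'a list \<Rightarrow> 'a list" where
  "qexch A le lab i c =
     (if 0 < i \<and> Suc i < length c \<and> lab (c ! (i - 1)) (c ! i) < lab (c ! i) (c ! Suc i)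
      then c[i := switch_elem A le lab (c ! (i - 1)) (c ! i) (c ! Suc i)] else c)"

definition qstep :: "'a set \<Rightarrow> ('a \<Rightarrow> 'a \<Rightarrow> bool) \<Rightarrow> ('a \<Rightarrow> 'a \<Rightarrow> 'l::order) \<Rightarrow> 'a \<Rightarrow> 'a \<Rightarrow> 'a list \<Rightarrow> 'a list \<Rightarrow> bool" where
  "qstep A le lab x y c d \<longleftrightarrow> maxchain A le x y c \<and> maxchain A le x y d \<and>
     (\<exists>i. qexch A le lab i c = d \<or> qexch A le lab i d = c)"

definition lequiv :: "'a set \<Rightarrow> ('a \<Rightarrow> 'a \<Rightarrow> bool) \<Rightarrow> ('a \<Rightarrow> 'a \<Rightarrow> 'l::order) \<Rightarrow> 'a \<Rightarrow> 'a \<Rightarrow> 'a list \<Rightarrow> 'a list \<Rightarrow> bool" where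
  "lequiv A le lab x y c d \<longleftrightarrow> maxchain A le x y c \<and> maxchain A le x y d \<and>
     (qstep A le lab x y)\<^sup>*\<^sup>* c d"

definition braid_relation :: "'a set \<Rightarrow> ('a \<Rightarrow> 'a \<Rightarrow> bool) \<Rightarrow> ('a \<Rightarrow> 'a \<Rightarrow> 'l::order) \<Rightarrow> bool" where
  "braid_relation A le lab \<longleftrightarrow> (\<forall>x y c i. maxchain A le x y c \<and> 0 < i \<and> i + 2 < length c \<and>
      label_word lab c ! (i - 1) < label_word lab c ! i \<and>
      label_word lab c ! i < label_word lab c ! (i + 1) \<longrightarrow>
      qexch A le lab i (qexch A le lab (Suc i) (qexch A le lab i c)) =
      qexch A le lab (Suc i) (qexch A le lab i (qexch A le lab (Suc i) c)))"

definition cancellative :: "'a set \<Rightarrow> ('a \<Rightarrow> 'a \<Rightarrow> bool) \<Rightarrow> ('a \<Rightarrow> 'a \<Rightarrow> 'l::order) \<Rightarrow> bool" where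
  "cancellative A le lab \<longleftrightarrow> (\<forall>z x y c c1 c2. z \<in> A \<and> x \<in> A \<and> y \<in> A \<and>
      le z x \<and> z \<noteq> x \<and> le x y \<and> x \<noteq> y \<and>
      maxchain A le z x c \<and> maxchain A le x y c1 \<and> maxchain A le x y c2 \<and>
      lequiv A le lab z y (c @ tl c1) (c @ tl c2) \<longrightarrow> lequiv A le lab x y c1 c2)"

definition chains_from :: "'a set \<Rightarrow> ('a \<Rightarrow> 'a \<Rightarrow> bool) \<Rightarrow> 'a \<Rightarrow> 'a list set" where
  "chains_from A le z = {c. sat_chain A le c \<and> hd c = z}"

definition chain_class :: "'a set \<Rightarrow> ('a \<Rightarrow> 'a \<Rightarrow> bool) \<Rightarrow> ('a \<Rightarrow> 'a \<Rightarrow> 'l::order) \<Rightarrow> 'a \<Rightarrow> 'a list \<Rightarrow> 'a list set" where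
  "chain_class A le lab z c = {d \<in> chains_from A le z. last d = last c \<and> lequiv A le lab z (last c) c d}"

definition Q_carrier :: "'a set \<Rightarrow> ('a \<Rightarrow> 'a \<Rightarrow> bool) \<Rightarrow> ('a \<Rightarrow> 'a \<Rightarrow> 'l::order) \<Rightarrow> 'a \<Rightarrow> 'a list set set" where
  "Q_carrier A le lab z = chain_class A le lab z ` chains_from A le z"

definition Q_le :: "'a set \<Rightarrow> ('a \<Rightarrow> 'a \<Rightarrow> bool) \<Rightarrow> ('a \<Rightarrow> 'a \<Rightarrow> 'l::order) \<Rightarrow> 'a \<Rightarrow> 'a list set \<Rightarrow> 'a list set \<Rightarrow> bool" where
  "Q_le A le lab z = (\<lambda>X Y. X \<in> Q_carrier A le lab z \<and> Y \<in> Q_carrier A le lab z \<and>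
      (\<exists>c\<in>X. \<exists>d\<in>Y. set c \<subseteq> set d))\<^sup>+\<^sup>+"

text \<open>S(X): the multiset of labels of (any) chain in the class X.\<close>
definition label_ms :: "('a \<Rightarrow> 'a \<Rightarrow> 'l) \<Rightarrow> 'a list set \<Rightarrow> 'l multiset" where
  "label_ms lab X = mset (label_word lab (SOME c. c \<in> X))"

definition lstar :: "('a \<Rightarrow> 'a \<Rightarrow> 'l) \<Rightarrow> 'a list set \<Rightarrow> 'a list set \<Rightarrow> 'l" where
  "lstar lab X Y = (THE l. label_ms lab Y - label_ms lab X = {#l#})"

end

theory Submission
  imports Defs "HOL-Library.Confluence"
begin

(* Fix an interval [x, y] whose bottom x is reachable from the least element. A quadratic exchange at
   an ascent turns the labels a < b into b a, so it increases the label word lexicographically; as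
   there are only finitely many maximal chains, these forward exchanges terminate. They are locally
   confluent: exchanges at distant positions commute, and at adjacent positions the braid relation
   closes the diagram. By Newman's lemma every ~ class of maximal chains of [x, y] contains exactly one
   ascent-free chain, namely the common normal form.
   In Q(P), fix c in X: the maximal chains of [X, Y] are the chains of classes of the prefixes of the
   extensions c @ f lying in Y, and their lambda*-words are the lambda-words of last c # f. Normalising
   an extension in [last c, y] yields an ascent-free one, and it is unique because, by the cancellative
   property, two extensions of c in the same class of Q(P) are already ~ in [last c, y].
*)

section \<open>Abstract rewriting\<close>

lemma newman:
  assumes wf: "wf {(y, x). r x y}"
    and local_confluence: "\<And>x y z. r x y \<Longrightarrow> r x z \<Longrightarrow> \<exists>u. r\<^sup>*\<^sup>* y u \<and> r\<^sup>*\<^sup>* z u"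
  shows "confluentp r"
proof (rule confluentpI)
  show "\<exists>u. r\<^sup>*\<^sup>* y u \<and> r\<^sup>*\<^sup>* z u" if "r\<^sup>*\<^sup>* x y" "r\<^sup>*\<^sup>* x z" for x y z
    using that
  proof (induction x arbitrary: y z rule: wf_induct_rule[OF wf])
    case (1 x)
    show ?case
    proof (cases "x = y \<or> x = z")
      case True
      then show ?thesis using "1.prems" by blast
    next
      case False
      then obtain y1 z1 where y1: "r x y1" "r\<^sup>*\<^sup>* y1 y" and z1: "r x z1" "r\<^sup>*\<^sup>* z1 z"
        using "1.prems" by (metis converse_rtranclpE)
      obtain u where u: "r\<^sup>*\<^sup>* y1 u" "r\<^sup>*\<^sup>* z1 u" using local_confluence[OF y1(1) z1(1)] by blast
      obtain v where v: "r\<^sup>*\<^sup>* y v" "r\<^sup>*\<^sup>* u v" using "1.IH"[OF _ y1(2) u(1)] y1(1) by blast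
      obtain w where w: "r\<^sup>*\<^sup>* z w" "r\<^sup>*\<^sup>* v w"
        using "1.IH"[OF _ z1(2) rtranclp_trans[OF u(2) v(2)]] z1(1) by blast
      show ?thesis using v(1) w by (blast intro: rtranclp_trans)
    qed
  qed
qed

lemma confluentp_normal_forms_eq:
  assumes "confluentp r" "equivclp r a b" "\<nexists>c. r a c" "\<nexists>c. r b c"
  shows "a = b"
proof -
  have "(r\<^sup>*\<^sup>* OO r\<inverse>\<inverse>\<^sup>*\<^sup>*) a b"
    using assms(1,2) semiconfluentp_equivclp confluentp_imp_semiconfluentp by metis
  then obtain c where "r\<^sup>*\<^sup>* a c" "r\<^sup>*\<^sup>* b c" by (auto simp: rtranclp_conversep)
  then show ?thesis using assms(3,4) by (metis converse_rtranclpE)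
qed

lemma wf_if_increasing_on_finite:
  assumes "finite D" "\<And>x y. r x y \<Longrightarrow> x \<in> D \<and> y \<in> D"
    and "\<And>x y. r x y \<Longrightarrow> (f x, f y) \<in> R" "trans R" "irrefl R"
  shows "wf {(y, x). r x y}"
proof -
  let ?S = "{(x, y). r x y}"
  have "finite ?S" using assms(1,2) by (blast intro: finite_subset[of _ "D \<times> D"])
  moreover have "(f a, f b) \<in> R" if "(a, b) \<in> ?S\<^sup>+" for a b
    using that by (induction rule: trancl_induct) (use assms(3,4) in \<open>auto dest: transD\<close>)
  then have "acyclic ?S" using assms(5) by (auto simp: acyclic_def irrefl_def)
  ultimately have "wf (?S\<inverse>)" by (rule finite_acyclic_wf_converse)
  then show ?thesis by (simp add: converse_unfold)
qed

lemma sat_chain_Nil [simp]: "\<not> sat_chain A le []"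
  by (simp add: sat_chain_def)

lemma sat_chain_singleton [simp]: "sat_chain A le [a] \<longleftrightarrow> a \<in> A"
  by (simp add: sat_chain_def)

lemma sat_chain_Cons_Cons [simp]:
  "sat_chain A le (a # b # l) \<longleftrightarrow> pcover A le a b \<and> sat_chain A le (b # l)"
  unfolding sat_chain_def by (auto simp: All_less_Suc2 pcover_def)

lemma sat_chain_Cons:
  "sat_chain A le (a # l) \<longleftrightarrow> (if l = [] then a \<in> A else pcover A le a (hd l) \<and> sat_chain A le l)"
  by (cases l) auto

lemma sat_chain_append:
  assumes "u \<noteq> []" "v \<noteq> []"
  shows "sat_chain A le (u @ v) \<longleftrightarrow>
    sat_chain A le u \<and> sat_chain A le v \<and> pcover A le (last u) (hd v)"
  using assms
proof (induction u)
  case (Cons a u)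
  then show ?case by (cases "u = []") (auto simp: sat_chain_Cons pcover_def)
qed simp

lemma sat_chain_appendD:
  assumes "sat_chain A le (u @ v)"
  shows "u \<noteq> [] \<Longrightarrow> sat_chain A le u" and "v \<noteq> [] \<Longrightarrow> sat_chain A le v"
  using assms by (cases "u = []"; cases "v = []"; simp add: sat_chain_append)+

lemma sat_chain_replace_infix:
  assumes "sat_chain A le (p @ u @ s)" "u \<noteq> []" "sat_chain A le u'"
    and "hd u' = hd u" "last u' = last u"
  shows "sat_chain A le (p @ u' @ s)"
proof -
  have "u' \<noteq> []" using assms(3) by auto
  moreover have "sat_chain A le (u' @ s)"
    using assms sat_chain_appendD(2)[OF assms(1)] \<open>u' \<noteq> []\<close>
    by (cases "s = []") (auto simp: sat_chain_append)
  ultimately show ?thesis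
    using assms by (cases "p = []") (auto simp: sat_chain_append)
qed

lemma sat_chain_list_update:
  assumes "sat_chain A le u" "0 < i" "Suc i < length u"
    and "pcover A le (u ! (i - 1)) s" "pcover A le s (u ! Suc i)"
  shows "sat_chain A le (u[i := s])"
  unfolding sat_chain_def
proof (intro conjI allI impI)
  show "u[i := s] \<noteq> []" using assms(3) by auto
  show "set (u[i := s]) \<subseteq> A"
    using assms(1,4) set_update_subset_insert[of u i s] by (auto simp: sat_chain_def pcover_def)
  fix j assume j: "Suc j < length (u[i := s])"
  consider "j = i - 1" | "j = i" | "j \<noteq> i" "Suc j \<noteq> i" by linarith
  then show "pcover A le (u[i := s] ! j) (u[i := s] ! Suc j)"
  proof cases
    case 1 then show ?thesis using assms(2,3,4) by simp
  next
    case 2 then show ?thesis using assms(3,5) by simp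
  next
    case 3 then show ?thesis using assms(1) j by (simp add: sat_chain_def)
  qed
qed

lemma append_tl_eq_butlast_append:
  "c \<noteq> [] \<Longrightarrow> d \<noteq> [] \<Longrightarrow> hd d = last c \<Longrightarrow> c @ tl d = butlast c @ d"
  by (metis append_butlast_last_id append_Cons append.assoc append_Nil list.collapse)

lemma maxchain_append_tl:
  assumes "maxchain A le x y c" "maxchain A le y w d"
  shows "maxchain A le x w (c @ tl d)"
proof -
  obtain d' where d: "d = y # d'" using assms(2) by (cases d) (auto simp: maxchain_def)
  have "c \<noteq> []" using assms(1) by (auto simp: maxchain_def)
  show ?thesis
  proof (cases "d' = []")
    case True
    then show ?thesis using assms d by (simp add: maxchain_def)
  next
    case False
    then show ?thesis
      using assms d \<open>c \<noteq> []\<close> by (auto simp: maxchain_def sat_chain_append sat_chain_Cons)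
  qed
qed

lemma label_word_Nil [simp]: "label_word lab [] = []"
  by (simp add: label_word_def)

lemma label_word_singleton [simp]: "label_word lab [a] = []"
  by (simp add: label_word_def)

lemma label_word_Cons_Cons [simp]: "label_word lab (a # b # l) = lab a b # label_word lab (b # l)"
  by (simp add: label_word_def)

lemma length_label_word [simp]: "length (label_word lab u) = length u - 1"
  by (simp add: label_word_def)

lemma nth_label_word: "k < length u - 1 \<Longrightarrow> label_word lab u ! k = lab (u ! k) (u ! Suc k)"
  by (simp add: label_word_def nth_tl)

lemma label_word_Cons:
  "label_word lab (a # l) = (if l = [] then [] else lab a (hd l) # label_word lab l)"
  by (cases l) auto

lemma label_word_snoc:
  "u \<noteq> [] \<Longrightarrow> label_word lab (u @ [a]) = label_word lab u @ [lab (last u) a]"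
  by (induction u rule: induct_list012) auto

lemma label_word_list_update:
  assumes "0 < i" "Suc i < length u"
  shows "label_word lab (u[i := s]) =
    (label_word lab u)[i - 1 := lab (u ! (i - 1)) s, i := lab s (u ! Suc i)]"
  using assms by (intro nth_equalityI) (auto simp: nth_label_word nth_list_update)

definition ascent_at :: "('a \<Rightarrow> 'a \<Rightarrow> 'l::order) \<Rightarrow> 'a list \<Rightarrow> nat \<Rightarrow> bool" where
  "ascent_at lab u i \<longleftrightarrow>
    0 < i \<and> Suc i < length u \<and> lab (u ! (i - 1)) (u ! i) < lab (u ! i) (u ! Suc i)"

lemma ascent_at_iff_label_word:
  "ascent_at lab u i \<longleftrightarrow>
    0 < i \<and> Suc i < length u \<and> label_word lab u ! (i - 1) < label_word lab u ! i"
  by (cases i) (auto simp: ascent_at_def nth_label_word)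

lemma ascent_free_iff_no_ascent_at:
  "ascent_free (label_word lab u) \<longleftrightarrow> (\<forall>i. \<not> ascent_at lab u i)"
proof
  assume free: "ascent_free (label_word lab u)"
  show "\<forall>i. \<not> ascent_at lab u i"
  proof (intro allI notI)
    fix i assume "ascent_at lab u i"
    then have "Suc (i - 1) < length (label_word lab u)"
      "label_word lab u ! (i - 1) < label_word lab u ! Suc (i - 1)"
      by (auto simp: ascent_at_iff_label_word)
    then show False using free unfolding ascent_free_def by blast
  qed
next
  assume none: "\<forall>i. \<not> ascent_at lab u i"
  show "ascent_free (label_word lab u)" unfolding ascent_free_def
  proof (intro allI impI notI)
    fix k assume "Suc k < length (label_word lab u)"
      "label_word lab u ! k < label_word lab u ! Suc k"
    then have "ascent_at lab u (Suc k)" by (simp add: ascent_at_iff_label_word)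
    then show False using none by blast
  qed
qed

lemma qexch_eq:
  "qexch A le lab i u =
    (if ascent_at lab u i then u[i := switch_elem A le lab (u ! (i - 1)) (u ! i) (u ! Suc i)] else u)"
  by (simp add: qexch_def ascent_at_def)

lemma qexch_if_not_ascent_at: "\<not> ascent_at lab u i \<Longrightarrow> qexch A le lab i u = u"
  by (simp add: qexch_eq)

lemma qexch_zero [simp]: "qexch A le lab 0 u = u"
  by (simp add: qexch_def)

lemma length_qexch [simp]: "length (qexch A le lab i u) = length u"
  by (simp add: qexch_def)

lemma hd_qexch [simp]: "hd (qexch A le lab i u) = hd u"
  by (cases u; cases i) (auto simp: qexch_def)

lemma last_qexch [simp]: "last (qexch A le lab i u) = last u"
  by (cases "u = []") (auto simp: qexch_def last_list_update)

lemma ascent_at_shift: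
  assumes "ascent_at lab u i"
  shows "ascent_at lab (p @ u @ s) (length p + i)"
    and "(p @ u @ s) ! (length p + i - 1) = u ! (i - 1)"
    and "(p @ u @ s) ! (length p + i) = u ! i"
    and "(p @ u @ s) ! Suc (length p + i) = u ! Suc i"
proof -
  have i: "0 < i" "Suc i < length u" using assms by (auto simp: ascent_at_def)
  show 1: "(p @ u @ s) ! (length p + i - 1) = u ! (i - 1)"
  proof -
    have "length p + i - 1 = length p + (i - 1)" using i by simp
    then show ?thesis using i by (simp only: nth_append_length_plus) (auto simp: nth_append)
  qed
  show 2: "(p @ u @ s) ! (length p + i) = u ! i"
    using i by (simp add: nth_append)
  show 3: "(p @ u @ s) ! Suc (length p + i) = u ! Suc i"
    using i by (simp add: nth_append)
  show "ascent_at lab (p @ u @ s) (length p + i)"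
    using assms i 1 2 3 unfolding ascent_at_def by auto
qed

lemma qexch_shift:
  assumes "ascent_at lab u i"
  shows "qexch A le lab (length p + i) (p @ u @ s) = p @ qexch A le lab i u @ s"
  using ascent_at_shift[OF assms, of p s] assms
  by (auto simp: qexch_eq ascent_at_def list_update_append)

lemma lequiv_refl: "maxchain A le x y u \<Longrightarrow> lequiv A le lab x y u u"
  by (simp add: lequiv_def)

lemma lequiv_sym: "lequiv A le lab x y u v \<Longrightarrow> lequiv A le lab x y v u"
proof -
  have "symp (qstep A le lab x y)" unfolding qstep_def by (rule sympI) blast
  then show "lequiv A le lab x y u v \<Longrightarrow> lequiv A le lab x y v u"
    unfolding lequiv_def by (blast dest: sympD[OF symp_rtranclp])
qed

lemma lequiv_trans:
  "lequiv A le lab x y u v \<Longrightarrow> lequiv A le lab x y v w \<Longrightarrow> lequiv A le lab x y u w"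
  unfolding lequiv_def by (meson rtranclp_trans)

lemma qstep_lift:
  assumes "qstep A le lab x y u v" "maxchain A le x' y' (p @ u @ s)"
  shows "qstep A le lab x' y' (p @ u @ s) (p @ v @ s)"
proof -
  have u: "maxchain A le x y u" and v: "maxchain A le x y v" using assms(1) by (auto simp: qstep_def)
  then have "u \<noteq> []" "v \<noteq> []" by (auto simp: maxchain_def)
  have "sat_chain A le (p @ v @ s)"
    using sat_chain_replace_infix[of A le p u s v] assms(2) u v \<open>u \<noteq> []\<close> by (auto simp: maxchain_def)
  moreover have "hd (p @ v @ s) = hd (p @ u @ s)" "last (p @ v @ s) = last (p @ u @ s)"
    using u v \<open>u \<noteq> []\<close> \<open>v \<noteq> []\<close> by (cases p; cases s; simp add: maxchain_def)+
  moreover obtain i where "qexch A le lab i u = v \<or> qexch A le lab i v = u"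
    using assms(1) by (auto simp: qstep_def)
  then have "\<exists>k. qexch A le lab k (p @ u @ s) = p @ v @ s \<or> qexch A le lab k (p @ v @ s) = p @ u @ s"
    \<comment> \<open>A trivial step (\<open>v = u\<close>) lifts to the identity exchange at position 0.\<close>
    by (metis qexch_shift qexch_if_not_ascent_at qexch_zero)
  ultimately show ?thesis using assms(2) by (auto simp: qstep_def maxchain_def)
qed

lemma lequiv_lift:
  assumes "lequiv A le lab x y u v" "maxchain A le x' y' (p @ u @ s)"
  shows "lequiv A le lab x' y' (p @ u @ s) (p @ v @ s)"
proof -
  have "(qstep A le lab x y)\<^sup>*\<^sup>* u v" using assms(1) by (simp add: lequiv_def)
  then show ?thesis
  proof (induction rule: rtranclp_induct)
    case base
    then show ?case using assms(2) by (rule lequiv_refl)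
  next
    case (step v w)
    have "qstep A le lab x' y' (p @ v @ s) (p @ w @ s)"
      using step by (intro qstep_lift) (auto simp: lequiv_def)
    moreover have "maxchain A le x' y' (p @ w @ s)" using calculation by (simp add: qstep_def)
    ultimately show ?case
      using step(3) unfolding lequiv_def by (blast intro: rtranclp.rtrancl_into_rtrancl)
  qed
qed

lemma chains_from_iff: "c \<in> chains_from A le z \<longleftrightarrow> maxchain A le z (last c) c"
  by (simp add: chains_from_def maxchain_def)

lemma chain_class_iff: "d \<in> chain_class A le lab z c \<longleftrightarrow> lequiv A le lab z (last c) c d"
  by (auto simp: chain_class_def chains_from_iff lequiv_def maxchain_def)

locale exchange_labeling =
  fixes P :: "'a set" and le :: "'a \<Rightarrow> 'a \<Rightarrow> bool" and z :: 'a
    and lab :: "'a \<Rightarrow> 'a \<Rightarrow> 'l::order" and rk :: "'a \<Rightarrow> nat"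
  assumes finite_P: "finite P" and poset: "is_poset P le"
    and z_in_P: "z \<in> P" and z_le: "\<And>x. x \<in> P \<Longrightarrow> le z x"
    and rank_z: "rk z = 0" and rank_cover: "\<And>x y. pcover P le x y \<Longrightarrow> rk y = Suc (rk x)"
    and switching: "rank_two_switching P le z lab"
    and braid: "braid_relation P le lab"
    and cancellation: "cancellative P le lab"
begin

abbreviation "L \<equiv> label_word lab"
abbreviation "U \<equiv> qexch P le lab"

lemma rank_nth: "sat_chain P le u \<Longrightarrow> j < length u \<Longrightarrow> rk (u ! j) = rk (hd u) + j"
proof (induction u arbitrary: j rule: induct_list012)
  case (3 a b l)
  have "pcover P le a b" "sat_chain P le (b # l)" using "3.prems"(1) by simp_all
  then show ?case using "3.IH"(2) "3.prems"(2) rank_cover by (cases j) auto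
qed auto

lemma rank_last: "sat_chain P le u \<Longrightarrow> rk (last u) = rk (hd u) + (length u - 1)"
  using rank_nth[of u "length u - 1"] by (cases "u = []") (auto simp: last_conv_nth)

lemma poset_refl: "a \<in> P \<Longrightarrow> le a a"
  using poset unfolding is_poset_def by blast

lemma poset_trans: "a \<in> P \<Longrightarrow> b \<in> P \<Longrightarrow> c \<in> P \<Longrightarrow> le a b \<Longrightarrow> le b c \<Longrightarrow> le a c"
  using poset unfolding is_poset_def by blast

lemma le_hd_last: "sat_chain P le u \<Longrightarrow> le (hd u) (last u)"
proof (induction u rule: induct_list012)
  case (2 a)
  then show ?case using poset_refl by simp
next
  case (3 a b l)
  have ab: "pcover P le a b" and bl: "sat_chain P le (b # l)" using "3.prems" by simp_all
  have "le b (last (b # l))" using "3.IH"(2)[OF bl] by simp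
  moreover have "last (b # l) \<in> P" using bl last_in_set[of "b # l"] by (auto simp: sat_chain_def)
  moreover have "a \<in> P" "b \<in> P" "le a b" using ab by (auto simp: pcover_def)
  ultimately show ?case using poset_trans[of a b "last (b # l)"] by simp
qed simp

definition reachable :: "'a \<Rightarrow> bool" where
  "reachable x \<longleftrightarrow> (\<exists>c. maxchain P le z x c)"

lemma switch_elem_spec:
  assumes "sat_chain P le u" "reachable (hd u)" "ascent_at lab u i"
  defines "s \<equiv> switch_elem P le lab (u ! (i - 1)) (u ! i) (u ! Suc i)"
  shows "pcover P le (u ! (i - 1)) s \<and> pcover P le s (u ! Suc i) \<and>
    lab (u ! (i - 1)) s = lab (u ! i) (u ! Suc i) \<and> lab s (u ! Suc i) = lab (u ! (i - 1)) (u ! i)"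
proof -
  \<comment> \<open>The switching property is only postulated for chains starting at the least element.\<close>
  obtain c where c: "maxchain P le z (hd u) c" using assms(2) reachable_def by blast
  have "maxchain P le z (last u) (c @ tl u)"
    using maxchain_append_tl[OF c] assms(1) by (simp add: maxchain_def)
  moreover have "c \<noteq> []" "u \<noteq> []" "hd u = last c" using c assms(1) by (auto simp: maxchain_def)
  then have "c @ tl u = butlast c @ u @ []" using append_tl_eq_butlast_append by simp
  ultimately have w: "sat_chain P le (butlast c @ u @ [])" "hd (butlast c @ u @ []) = z"
    by (auto simp: maxchain_def)
  note shift = ascent_at_shift[OF assms(3), of "butlast c" "[]"]
  let ?w = "butlast c @ u @ []" and ?k = "length (butlast c) + i"
  have "\<exists>!s. pcover P le (?w ! (?k - 1)) s \<and> pcover P le s (?w ! Suc ?k) \<and>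
    lab (?w ! (?k - 1)) s = lab (?w ! ?k) (?w ! Suc ?k) \<and> lab s (?w ! Suc ?k) = lab (?w ! (?k - 1)) (?w ! ?k)"
    using switching[unfolded rank_two_switching_def, rule_format, of ?w ?k] w shift(1)
    unfolding ascent_at_def by blast
  then have "\<exists>!s. pcover P le (u ! (i - 1)) s \<and> pcover P le s (u ! Suc i) \<and>
    lab (u ! (i - 1)) s = lab (u ! i) (u ! Suc i) \<and> lab s (u ! Suc i) = lab (u ! (i - 1)) (u ! i)"
    unfolding shift(2-4) .
  from theI'[OF this] show ?thesis unfolding s_def switch_elem_def .
qed

lemma qexch_at_ascent:
  assumes "sat_chain P le u" "reachable (hd u)" "ascent_at lab u i"
  shows "sat_chain P le (U i u)" and "L (U i u) = (L u)[i - 1 := L u ! i, i := L u ! (i - 1)]"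
proof -
  define s where "s = switch_elem P le lab (u ! (i - 1)) (u ! i) (u ! Suc i)"
  note S = switch_elem_spec[OF assms, folded s_def]
  have i: "0 < i" "Suc i < length u" using assms(3) by (auto simp: ascent_at_def)
  have Ui: "U i u = u[i := s]" using assms(3) by (simp add: qexch_eq s_def)
  show "sat_chain P le (U i u)" using sat_chain_list_update[OF assms(1) i] S Ui by simp
  have "L (U i u) = (L u)[i - 1 := lab (u ! (i - 1)) s, i := lab s (u ! Suc i)]"
    unfolding Ui by (rule label_word_list_update[OF i])
  also have "\<dots> = (L u)[i - 1 := L u ! i, i := L u ! (i - 1)]"
    using S i by (simp add: nth_label_word)
  finally show "L (U i u) = (L u)[i - 1 := L u ! i, i := L u ! (i - 1)]" .
qed

end

section \<open>Ascent-free normal forms in an interval\<close>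

locale exchange_interval = exchange_labeling +
  fixes x y :: 'a
  assumes reachable_x: "reachable x"
begin

definition ascent_exch :: "'a list \<Rightarrow> 'a list \<Rightarrow> bool" where
  "ascent_exch u v \<longleftrightarrow> maxchain P le x y u \<and> (\<exists>i. ascent_at lab u i \<and> v = U i u)"

lemma ascent_exch_at:
  assumes "maxchain P le x y u" "ascent_at lab u i"
  shows "ascent_exch u (U i u)" and "maxchain P le x y (U i u)"
    and "L (U i u) = (L u)[i - 1 := L u ! i, i := L u ! (i - 1)]"
proof -
  have u: "sat_chain P le u" "reachable (hd u)" using assms(1) reachable_x by (auto simp: maxchain_def)
  show "ascent_exch u (U i u)" using assms by (auto simp: ascent_exch_def)
  show "maxchain P le x y (U i u)" using qexch_at_ascent(1)[OF u assms(2)] assms(1)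
    by (simp add: maxchain_def)
  show "L (U i u) = (L u)[i - 1 := L u ! i, i := L u ! (i - 1)]"
    by (rule qexch_at_ascent(2)[OF u assms(2)])
qed

lemma ascent_exch_maxchain:
  "ascent_exch u v \<Longrightarrow> maxchain P le x y u \<and> maxchain P le x y v"
  using ascent_exch_at(2) by (auto simp: ascent_exch_def)

lemma ascent_exch_lexord:
  assumes "ascent_exch u v"
  shows "(L u, L v) \<in> lexord {(a, b). a < b}"
proof -
  obtain i where u: "maxchain P le x y u" "ascent_at lab u i" and v: "v = U i u"
    using assms by (auto simp: ascent_exch_def)
  have i: "0 < i" "Suc i < length u" "L u ! (i - 1) < L u ! i"
    using u(2) by (auto simp: ascent_at_iff_label_word)
  have Lv: "L v = (L u)[i - 1 := L u ! i, i := L u ! (i - 1)]" using ascent_exch_at(3)[OF u] v by simp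
  have "L u = take (i - 1) (L u) @ L u ! (i - 1) # drop i (L u)"
    using i id_take_nth_drop[of "i - 1" "L u"] by simp
  moreover have "L v = take (i - 1) (L u) @ L u ! i # drop i (L v)"
    using i id_take_nth_drop[of "i - 1" "L v"] Lv by (simp add: nth_list_update)
  ultimately show ?thesis using i(3) unfolding lexord_def by blast
qed

lemma finite_maxchains: "finite {u. maxchain P le x y u}"
proof -
  have "{u. maxchain P le x y u} \<subseteq> {u. set u \<subseteq> P \<and> length u \<le> rk y - rk x + 1}"
    using rank_last by (fastforce simp: maxchain_def sat_chain_def)
  then show ?thesis using finite_lists_length_le[OF finite_P] by (rule finite_subset)
qed

lemma wf_ascent_exch: "wf {(v, u). ascent_exch u v}"
proof (rule wf_if_increasing_on_finite[OF finite_maxchains])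
  show "trans (lexord {(a :: 'l::order, b). a < b})"
    by (rule lexord_transI) (auto intro: transI order.strict_trans)
  show "irrefl (lexord {(a :: 'l::order, b). a < b})"
    by (simp add: irrefl_def lexord_irreflexive)
qed (use ascent_exch_maxchain ascent_exch_lexord in auto)

lemma ascent_exch_commute:
  assumes "maxchain P le x y u" "ascent_at lab u i" "ascent_at lab u j" "Suc i < j"
  shows "ascent_exch (U i u) (U j (U i u))" and "ascent_exch (U j u) (U i (U j u))"
    and "U j (U i u) = U i (U j u)"
proof -
  define si where "si = switch_elem P le lab (u ! (i - 1)) (u ! i) (u ! Suc i)"
  define sj where "sj = switch_elem P le lab (u ! (j - 1)) (u ! j) (u ! Suc j)"
  have Ui: "U i u = u[i := si]" using assms(2) by (simp add: qexch_eq si_def)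
  have Uj: "U j u = u[j := sj]" using assms(3) by (simp add: qexch_eq sj_def)
  have Ui_at_j: "U i u ! (j - 1) = u ! (j - 1)" "U i u ! j = u ! j" "U i u ! Suc j = u ! Suc j"
    using assms(4) Ui by auto
  have Uj_at_i: "U j u ! (i - 1) = u ! (i - 1)" "U j u ! i = u ! i" "U j u ! Suc i = u ! Suc i"
    using assms(4) Uj by auto
  have ij: "ascent_at lab (U i u) j" using assms(3) Ui_at_j by (simp add: ascent_at_def)
  have ji: "ascent_at lab (U j u) i" using assms(2) Uj_at_i by (simp add: ascent_at_def)
  show "ascent_exch (U i u) (U j (U i u))" by (rule ascent_exch_at(1)[OF ascent_exch_at(2)[OF assms(1,2)] ij])
  show "ascent_exch (U j u) (U i (U j u))" by (rule ascent_exch_at(1)[OF ascent_exch_at(2)[OF assms(1,3)] ji])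
  have "U j (U i u) = u[i := si, j := sj]" using ij Ui_at_j Ui by (simp add: qexch_eq sj_def)
  also have "\<dots> = u[j := sj, i := si]" using assms(4) by (simp add: list_update_swap)
  also have "\<dots> = U i (U j u)" using ji Uj_at_i Uj by (simp add: qexch_eq si_def)
  finally show "U j (U i u) = U i (U j u)" .
qed

lemma ascent_exch_braid:
  assumes "maxchain P le x y u" "ascent_at lab u i" "ascent_at lab u (Suc i)"
  shows "\<exists>w. ascent_exch\<^sup>*\<^sup>* (U i u) w \<and> ascent_exch\<^sup>*\<^sup>* (U (Suc i) u) w"
proof -
  have i: "0 < i" "Suc (Suc i) < length u" using assms(2,3) by (auto simp: ascent_at_def)
  have ab: "L u ! (i - 1) < L u ! i" and bc: "L u ! i < L u ! Suc i"
    using assms(2,3) by (auto simp: ascent_at_iff_label_word)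
  have ac: "L u ! (i - 1) < L u ! Suc i" using ab bc by (rule order.strict_trans)
  \<comment> \<open>The labels \<open>a < b < c\<close> at positions \<open>i - 1, i, i + 1\<close> are rearranged along
    \<open>bac, bca, cba\<close> and along \<open>acb, cab, cba\<close>, each step exchanging an ascent.\<close>
  define v1 v2 where "v1 = U i u" and "v2 = U (Suc i) u"
  note E1 = ascent_exch_at[OF assms(1,2), folded v1_def]
  note E2 = ascent_exch_at[OF assms(1,3), folded v2_def]
  have a1: "ascent_at lab v1 (Suc i)"
    using i ac E1(3) by (simp add: ascent_at_iff_label_word nth_list_update v1_def)
  have a2: "ascent_at lab v2 i"
    using i ac E2(3) by (simp add: ascent_at_iff_label_word nth_list_update v2_def)
  define v3 v4 where "v3 = U (Suc i) v1" and "v4 = U i v2"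
  note E3 = ascent_exch_at[OF E1(2) a1, folded v3_def]
  note E4 = ascent_exch_at[OF E2(2) a2, folded v4_def]
  have a3: "ascent_at lab v3 i"
    using i bc E1(3) E3(3) by (simp add: ascent_at_iff_label_word nth_list_update v1_def v3_def)
  have a4: "ascent_at lab v4 (Suc i)"
    using i ab E2(3) E4(3) by (simp add: ascent_at_iff_label_word nth_list_update v2_def v4_def)
  have "U i v3 = U (Suc i) v4"
    using braid[unfolded braid_relation_def, rule_format, of x y u i] assms(1) i ab bc
    by (simp add: v1_def v2_def v3_def v4_def)
  moreover have "ascent_exch\<^sup>*\<^sup>* v1 (U i v3)"
    using E3(1) ascent_exch_at(1)[OF E3(2) a3] by (meson r_into_rtranclp rtranclp.rtrancl_into_rtrancl)
  moreover have "ascent_exch\<^sup>*\<^sup>* v2 (U (Suc i) v4)"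
    using E4(1) ascent_exch_at(1)[OF E4(2) a4] by (meson r_into_rtranclp rtranclp.rtrancl_into_rtrancl)
  ultimately show ?thesis unfolding v1_def v2_def by metis
qed

lemma ascent_exch_join:
  assumes "maxchain P le x y u" "ascent_at lab u i" "ascent_at lab u j" "i < j"
  shows "\<exists>w. ascent_exch\<^sup>*\<^sup>* (U i u) w \<and> ascent_exch\<^sup>*\<^sup>* (U j u) w"
proof (cases "j = Suc i")
  case True
  then show ?thesis using ascent_exch_braid assms by blast
next
  case False
  then show ?thesis using ascent_exch_commute[OF assms(1-3)] assms(4)
    by (metis Suc_lessI r_into_rtranclp)
qed

lemma ascent_exch_local_confluence:
  assumes "ascent_exch u v" "ascent_exch u w"
  shows "\<exists>t. ascent_exch\<^sup>*\<^sup>* v t \<and> ascent_exch\<^sup>*\<^sup>* w t"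
proof -
  obtain i j where u: "maxchain P le x y u" "ascent_at lab u i" "ascent_at lab u j"
    and vw: "v = U i u" "w = U j u"
    using assms by (auto simp: ascent_exch_def)
  consider "i = j" | "i < j" | "j < i" by linarith
  then show ?thesis
  proof cases
    case 1
    then show ?thesis using vw by blast
  next
    case 2
    then show ?thesis using ascent_exch_join[OF u] vw by blast
  next
    case 3
    then show ?thesis using ascent_exch_join[OF u(1,3,2)] vw by blast
  qed
qed

lemma confluentp_ascent_exch: "confluentp ascent_exch"
  using wf_ascent_exch ascent_exch_local_confluence by (rule newman)

lemma ascent_exch_normal_iff:
  "maxchain P le x y u \<Longrightarrow> (\<nexists>v. ascent_exch u v) \<longleftrightarrow> ascent_free (L u)"
  by (auto simp: ascent_exch_def ascent_free_iff_no_ascent_at)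

lemma ascent_exch_or_fixed: "maxchain P le x y u \<Longrightarrow> ascent_exch u (U i u) \<or> U i u = u"
  unfolding ascent_exch_def by (cases "ascent_at lab u i") (blast, simp add: qexch_if_not_ascent_at)

lemma qstep_imp_ascent_exch:
  assumes "qstep P le lab x y u v"
  shows "ascent_exch u v \<or> ascent_exch v u \<or> u = v"
proof -
  have "maxchain P le x y u" "maxchain P le x y v" using assms by (auto simp: qstep_def)
  moreover obtain i where "U i u = v \<or> U i v = u" using assms by (auto simp: qstep_def)
  ultimately show ?thesis using ascent_exch_or_fixed by metis
qed

lemma lequiv_imp_equivclp: "lequiv P le lab x y u v \<Longrightarrow> equivclp ascent_exch u v"
proof -
  assume "lequiv P le lab x y u v"
  then have "(qstep P le lab x y)\<^sup>*\<^sup>* u v" by (simp add: lequiv_def)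
  then show "equivclp ascent_exch u v"
  proof (induction rule: rtranclp_induct)
    case (step v w)
    with qstep_imp_ascent_exch[OF step(2)] show ?case
      using equivclp_into_equivclp[OF step(3)] by auto
  qed simp
qed

lemma ascent_exch_imp_lequiv:
  assumes "ascent_exch\<^sup>*\<^sup>* u v" "maxchain P le x y u"
  shows "lequiv P le lab x y u v"
  using assms(1)
proof (induction rule: rtranclp_induct)
  case base
  then show ?case using assms(2) by (rule lequiv_refl)
next
  case (step v w)
  obtain i where "w = U i v" using step(2) by (auto simp: ascent_exch_def)
  then have "qstep P le lab x y v w" using ascent_exch_maxchain[OF step(2)] unfolding qstep_def by blast
  then show ?case using step(3) unfolding lequiv_def qstep_def by (blast intro: rtranclp.rtrancl_into_rtrancl)
qed

lemma ascent_free_lequiv_exists: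
  "maxchain P le x y u \<Longrightarrow> \<exists>v. lequiv P le lab x y u v \<and> ascent_free (L v)"
proof (induction u rule: wf_induct_rule[OF wf_ascent_exch])
  case (1 u)
  show ?case
  proof (cases "ascent_free (L u)")
    case True
    then show ?thesis using lequiv_refl[OF "1.prems"] by blast
  next
    case False
    then obtain v where v: "ascent_exch u v" using ascent_exch_normal_iff[OF "1.prems"] by blast
    then obtain w where w: "lequiv P le lab x y v w" "ascent_free (L w)"
      using "1.IH" ascent_exch_maxchain by blast
    have "lequiv P le lab x y u v" using ascent_exch_imp_lequiv[OF _ "1.prems"] v by blast
    then have "lequiv P le lab x y u w" using w(1) by (rule lequiv_trans)
    then show ?thesis using w(2) by blast
  qed
qed

lemma ascent_free_lequiv_unique:
  assumes "lequiv P le lab x y u v" "ascent_free (L u)" "ascent_free (L v)"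
  shows "u = v"
proof (rule confluentp_normal_forms_eq[OF confluentp_ascent_exch lequiv_imp_equivclp[OF assms(1)]])
  have "maxchain P le x y u" "maxchain P le x y v" using assms(1) by (auto simp: lequiv_def)
  then show "\<nexists>c. ascent_exch u c" "\<nexists>c. ascent_exch v c"
    using assms(2,3) ascent_exch_normal_iff by blast+
qed

end

section \<open>The poset of exchange classes\<close>

context exchange_labeling
begin

abbreviation "C \<equiv> chains_from P le z"
abbreviation "cls \<equiv> chain_class P le lab z"
abbreviation "Q \<equiv> Q_carrier P le lab z"
abbreviation "leQ \<equiv> Q_le P le lab z"

lemma chain_class_refl: "c \<in> C \<Longrightarrow> c \<in> cls c"
  by (simp add: chain_class_iff chains_from_iff lequiv_refl)

lemma chain_class_eq:
  assumes "d \<in> cls c" shows "cls d = cls c"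
proof -
  have cd: "lequiv P le lab z (last c) c d" and "last d = last c"
    using assms by (auto simp: chain_class_iff lequiv_def maxchain_def)
  then show ?thesis
    unfolding set_eq_iff chain_class_iff by (metis lequiv_sym lequiv_trans)
qed

lemma Q_carrier_eq_class: "X \<in> Q \<Longrightarrow> d \<in> X \<Longrightarrow> X = cls d"
  unfolding Q_carrier_def using chain_class_eq by blast

lemma Q_carrier_chain: "X \<in> Q \<Longrightarrow> d \<in> X \<Longrightarrow> d \<in> C"
  by (auto simp: Q_carrier_def chain_class_iff chains_from_def lequiv_def maxchain_def)

lemma Q_carrier_nonempty: "X \<in> Q \<Longrightarrow> \<exists>c. c \<in> X"
  using chain_class_refl by (auto simp: Q_carrier_def)

lemma chain_class_in_Q: "c \<in> C \<Longrightarrow> cls c \<in> Q"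
  by (simp add: Q_carrier_def)

lemma length_chain: "c \<in> C \<Longrightarrow> length c = Suc (rk (last c))"
  using rank_last[of c] rank_z by (cases c) (auto simp: chains_from_def)

lemma length_chain_class: "d \<in> cls c \<Longrightarrow> length d = length c"
  using length_chain by (auto simp: chain_class_iff lequiv_def chains_from_iff maxchain_def)

lemma chains_from_prefix: "c @ f \<in> C \<Longrightarrow> c \<noteq> [] \<Longrightarrow> c \<in> C"
  using sat_chain_appendD(1) by (auto simp: chains_from_def)

lemma chain_class_append:
  assumes "d \<in> cls c" "c @ f \<in> C" shows "d @ f \<in> cls (c @ f)"
proof -
  have "lequiv P le lab z (last c) c d" using assms(1) by (simp add: chain_class_iff)
  moreover have "maxchain P le z (last (c @ f)) ([] @ c @ f)" using assms(2) by (simp add: chains_from_iff)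
  ultimately show ?thesis using lequiv_lift[of P le lab z "last c" c d z "last (c @ f)" "[]" f]
    by (simp add: chain_class_iff)
qed

lemma prefix_if_subset:
  assumes "c \<in> C" "d \<in> C" "set c \<subseteq> set d"
  shows "\<exists>f. d = c @ f"
proof -
  have rank_index: "rk (e ! j) = j" if "e \<in> C" "j < length e" for e j
    using that rank_nth rank_z by (simp add: chains_from_def)
  have same: "j < length d \<and> d ! j = c ! j" if j: "j < length c" for j
  proof -
    obtain k where k: "k < length d" "d ! k = c ! j" using assms(3) j by (metis nth_mem in_set_conv_nth subsetD)
    then have "k = j" using rank_index[OF assms(1) j] rank_index[OF assms(2) k(1)] by simp
    then show ?thesis using k by simp
  qed
  have "length c \<le> length d" using same[of "length c - 1"] assms(1) by (cases c) (auto simp: chains_from_def)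
  then have "take (length c) d = c" using same by (intro nth_equalityI) auto
  then show ?thesis by (metis append_take_drop_id)
qed

lemma Q_le_iff: "leQ X Y \<longleftrightarrow> X \<in> Q \<and> Y \<in> Q \<and> (\<forall>c\<in>X. \<exists>f. c @ f \<in> Y)"
proof -
  define B where "B = (\<lambda>X Y. X \<in> Q \<and> Y \<in> Q \<and> (\<exists>c\<in>X. \<exists>d\<in>Y. set c \<subseteq> set d))"
  define R where "R = (\<lambda>X Y. X \<in> Q \<and> Y \<in> Q \<and> (\<forall>c\<in>X. \<exists>f. c @ f \<in> Y))"
  have B_imp_R: "R X Y" if XY: "B X Y" for X Y
  proof -
    obtain c d where cd: "X \<in> Q" "Y \<in> Q" "c \<in> X" "d \<in> Y" "set c \<subseteq> set d"
      using XY unfolding B_def by blast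
    then obtain f where f: "d = c @ f" using prefix_if_subset Q_carrier_chain by blast
    have "c' @ f \<in> Y" if "c' \<in> X" for c'
      using chain_class_append[of c' c f] that cd f Q_carrier_eq_class Q_carrier_chain by blast
    then show ?thesis using cd unfolding R_def by blast
  qed
  have R_imp_B: "B X Y" if XY: "R X Y" for X Y
  proof -
    obtain c where "c \<in> X" using XY Q_carrier_nonempty unfolding R_def by blast
    moreover obtain f where "c @ f \<in> Y" using XY calculation unfolding R_def by blast
    moreover have "set c \<subseteq> set (c @ f)" by simp
    ultimately show ?thesis using XY unfolding B_def R_def by blast
  qed
  have R_trans: "R X W" if "R X Y" "R Y W" for X Y W
    using that unfolding R_def by (metis append.assoc)
  have "B\<^sup>+\<^sup>+ X Y \<Longrightarrow> R X Y"
    by (induction rule: tranclp_induct) (blast intro: B_imp_R R_trans)+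
  moreover have "R X Y \<Longrightarrow> B\<^sup>+\<^sup>+ X Y" using R_imp_B by blast
  moreover have "leQ X Y \<longleftrightarrow> B\<^sup>+\<^sup>+ X Y" unfolding Q_le_def B_def by simp
  ultimately show ?thesis unfolding R_def by blast
qed

lemma chain_class_snoc_neq: "c @ [a] \<in> C \<Longrightarrow> cls (c @ [a]) \<noteq> cls c"
  using chain_class_refl length_chain_class by fastforce

lemma Q_cover_snoc:
  assumes "c \<in> C" "W \<in> Q" "c @ [a] \<in> W"
  shows "pcover Q leQ (cls c) W"
proof -
  have W: "W = cls (c @ [a])" using Q_carrier_eq_class[OF assms(2,3)] .
  have ca: "c @ [a] \<in> C" using Q_carrier_chain[OF assms(2,3)] .
  have "leQ (cls c) W" unfolding Q_le_iff
    using chain_class_in_Q[OF assms(1)] assms(2) chain_class_append[OF _ ca] W by blast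
  moreover have "cls c \<noteq> W" using chain_class_snoc_neq[OF ca] W by simp
  moreover have "V = cls c \<or> V = W" if V: "V \<in> Q" "leQ (cls c) V" "leQ V W" for V
  proof -
    obtain f where f: "c @ f \<in> V" using V(2) chain_class_refl[OF assms(1)] unfolding Q_le_iff by blast
    obtain g where g: "c @ f @ g \<in> W" using V(3) f unfolding Q_le_iff by (metis append.assoc)
    have "length (c @ f @ g) = length (c @ [a])" using g W length_chain_class by blast
    then consider "f = []" | "g = []" by (cases f) auto
    then show ?thesis
    proof cases
      case 1
      then show ?thesis using Q_carrier_eq_class[OF V(1) f] by simp
    next
      case 2
      then show ?thesis using Q_carrier_eq_class[OF V(1) f] Q_carrier_eq_class[OF assms(2) g] by simp
    qed
  qed
  ultimately show ?thesis
    using chain_class_in_Q[OF assms(1)] assms(2) unfolding pcover_def by blast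
qed

lemma Q_cover_imp_snoc:
  assumes "c \<in> C" "W \<in> Q" "pcover Q leQ (cls c) W"
  shows "\<exists>a. c @ [a] \<in> W"
proof -
  obtain f where f: "c @ f \<in> W"
    using assms(3) chain_class_refl[OF assms(1)] unfolding pcover_def Q_le_iff by blast
  have "W \<noteq> cls c" using assms(3) unfolding pcover_def by blast
  then have "f \<noteq> []" using Q_carrier_eq_class[OF assms(2) f] by auto
  then obtain a f' where af: "f = a # f'" by (cases f) auto
  have caf: "(c @ [a]) @ f' \<in> W" using f af by simp
  have ca: "c @ [a] \<in> C" using chains_from_prefix Q_carrier_chain[OF assms(2) caf] by simp
  define V where "V = cls (c @ [a])"
  have "V \<in> Q" unfolding V_def using chain_class_in_Q[OF ca] .
  moreover have "leQ (cls c) V"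
    unfolding Q_le_iff V_def using chain_class_in_Q assms(1) ca chain_class_append by blast
  moreover have "leQ V W"
  proof -
    have "d @ f' \<in> W" if "d \<in> V" for d
      using chain_class_append[of d "c @ [a]" f'] that Q_carrier_chain[OF assms(2) caf]
        Q_carrier_eq_class[OF assms(2) caf] unfolding V_def by simp
    then show ?thesis unfolding Q_le_iff using \<open>V \<in> Q\<close> assms(2) by blast
  qed
  moreover have "V \<noteq> cls c" using chain_class_snoc_neq[OF ca] V_def by simp
  ultimately have "V = W" using assms(3) unfolding pcover_def by blast
  then show ?thesis using chain_class_refl[OF ca] V_def by blast
qed

lemma reachable_z: "reachable z"
  unfolding reachable_def using z_in_P by (intro exI[of _ "[z]"]) (simp add: maxchain_def)

lemma mset_label_word_qexch:
  assumes "sat_chain P le u" "reachable (hd u)"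
  shows "mset (L (U i u)) = mset (L u)"
proof (cases "ascent_at lab u i")
  case True
  then have "i - 1 < length (L u)" "i < length (L u)" by (auto simp: ascent_at_def)
  then show ?thesis using qexch_at_ascent(2)[OF assms True] mset_swap by metis
next
  case False
  then show ?thesis by (simp add: qexch_if_not_ascent_at)
qed

lemma mset_label_word_lequiv:
  assumes "lequiv P le lab x y u v" "reachable x"
  shows "mset (L u) = mset (L v)"
proof -
  have "(qstep P le lab x y)\<^sup>*\<^sup>* u v" using assms(1) by (simp add: lequiv_def)
  then show ?thesis
  proof (induction rule: rtranclp_induct)
    case (step v w)
    then have "sat_chain P le v" "reachable (hd v)" "sat_chain P le w" "reachable (hd w)"
      using assms(2) by (auto simp: qstep_def maxchain_def)
    moreover obtain i where "U i v = w \<or> U i w = v" using step(2) by (auto simp: qstep_def)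
    ultimately have "mset (L v) = mset (L w)" using mset_label_word_qexch by auto
    then show ?case using step(3) by simp
  qed simp
qed

lemma label_ms_chain_class:
  assumes "c \<in> C" shows "label_ms lab (cls c) = mset (L c)"
proof -
  have "(SOME d. d \<in> cls c) \<in> cls c" using chain_class_refl[OF assms] by (rule someI)
  then show ?thesis
    using mset_label_word_lequiv reachable_z by (simp add: label_ms_def chain_class_iff)
qed

lemma lstar_snoc:
  assumes "c \<in> C" "c @ [a] \<in> C"
  shows "lstar lab (cls c) (cls (c @ [a])) = lab (last c) a"
proof -
  have "c \<noteq> []" using assms(1) by (auto simp: chains_from_def)
  then have "label_ms lab (cls (c @ [a])) - label_ms lab (cls c) = {#lab (last c) a#}"
    using label_ms_chain_class[OF assms(1)] label_ms_chain_class[OF assms(2)]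
    by (simp add: label_word_snoc)
  then show ?thesis unfolding lstar_def by simp
qed

fun prefix_classes :: "'a list \<Rightarrow> 'a list \<Rightarrow> 'a list set list" where
  "prefix_classes c [] = [cls c]"
| "prefix_classes c (a # f) = cls c # prefix_classes (c @ [a]) f"

lemma prefix_classes_not_Nil [simp]: "prefix_classes c f \<noteq> []"
  by (cases f) auto

lemma hd_prefix_classes [simp]: "hd (prefix_classes c f) = cls c"
  by (cases f) auto

lemma last_prefix_classes [simp]: "last (prefix_classes c f) = cls (c @ f)"
  by (induction f arbitrary: c) auto

lemma sat_chain_prefix_classes: "c \<in> C \<Longrightarrow> c @ f \<in> C \<Longrightarrow> sat_chain Q leQ (prefix_classes c f)"
proof (induction f arbitrary: c)
  case Nil
  then show ?case using chain_class_in_Q by simp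
next
  case (Cons a f)
  have ca: "c @ [a] \<in> C" using chains_from_prefix[of "c @ [a]" f] Cons.prems by simp
  have "pcover Q leQ (cls c) (cls (c @ [a]))"
    using Q_cover_snoc[OF Cons.prems(1) chain_class_in_Q[OF ca] chain_class_refl[OF ca]] .
  then show ?case using Cons.IH[OF ca] Cons.prems by (simp add: sat_chain_Cons)
qed

lemma label_word_prefix_classes:
  "c \<in> C \<Longrightarrow> c @ f \<in> C \<Longrightarrow> label_word (lstar lab) (prefix_classes c f) = L (last c # f)"
proof (induction f arbitrary: c)
  case (Cons a f)
  have ca: "c @ [a] \<in> C" using chains_from_prefix[of "c @ [a]" f] Cons.prems by simp
  then show ?case
    using Cons.IH[OF ca] Cons.prems lstar_snoc[OF Cons.prems(1) ca] by (simp add: label_word_Cons)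
qed simp

lemma sat_chain_Q_is_prefix_classes:
  "sat_chain Q leQ Xs \<Longrightarrow> c \<in> C \<Longrightarrow> hd Xs = cls c \<Longrightarrow> \<exists>f. c @ f \<in> C \<and> Xs = prefix_classes c f"
proof (induction Xs arbitrary: c rule: induct_list012)
  case (2 X)
  then show ?case by (intro exI[of _ "[]"]) simp
next
  case (3 X W Ws)
  have cover: "pcover Q leQ (cls c) W" and W: "sat_chain Q leQ (W # Ws)" using 3 by auto
  then have "W \<in> Q" by (simp add: pcover_def)
  then obtain a where ca: "c @ [a] \<in> W" using Q_cover_imp_snoc[OF "3.prems"(2)] cover by blast
  have "c @ [a] \<in> C" "W = cls (c @ [a])"
    using Q_carrier_chain Q_carrier_eq_class \<open>W \<in> Q\<close> ca by auto
  then obtain f where "(c @ [a]) @ f \<in> C" "W # Ws = prefix_classes (c @ [a]) f"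
    using "3.IH"(2)[OF W \<open>c @ [a] \<in> C\<close>] by auto
  then show ?case using "3.prems"(3) by (intro exI[of _ "a # f"]) simp
qed simp

lemma maxchain_Q_iff:
  assumes "X \<in> Q" "Y \<in> Q" "c \<in> X"
  shows "maxchain Q leQ X Y Xs \<longleftrightarrow> (\<exists>f. c @ f \<in> Y \<and> Xs = prefix_classes c f)"
proof
  have c: "c \<in> C" "X = cls c" using Q_carrier_chain Q_carrier_eq_class assms by auto
  assume "maxchain Q leQ X Y Xs"
  then have "sat_chain Q leQ Xs" "hd Xs = cls c" "last Xs = Y" using c by (auto simp: maxchain_def)
  then obtain f where f: "c @ f \<in> C" "Xs = prefix_classes c f"
    using sat_chain_Q_is_prefix_classes c(1) by blast
  moreover have "Y = cls (c @ f)" using \<open>last Xs = Y\<close> f by simp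
  ultimately show "\<exists>f. c @ f \<in> Y \<and> Xs = prefix_classes c f" using chain_class_refl by blast
next
  have c: "c \<in> C" "X = cls c" using Q_carrier_chain Q_carrier_eq_class assms by auto
  assume "\<exists>f. c @ f \<in> Y \<and> Xs = prefix_classes c f"
  then obtain f where f: "c @ f \<in> Y" "Xs = prefix_classes c f" by blast
  have "c @ f \<in> C" "Y = cls (c @ f)"
    using Q_carrier_chain[OF assms(2) f(1)] Q_carrier_eq_class[OF assms(2) f(1)] by auto
  then show "maxchain Q leQ X Y Xs"
    unfolding maxchain_def using sat_chain_prefix_classes[OF c(1)] c(2) f(2) by simp
qed

lemma maxchain_eq_singleton: "maxchain P le x x c \<Longrightarrow> c = [x]"
  using rank_last[of c] by (cases c) (auto simp: maxchain_def)

lemma maxchain_suffix: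
  assumes "c \<in> C" "c @ f \<in> C"
  shows "maxchain P le (last c) (last (c @ f)) (last c # f)"
proof -
  have "c \<noteq> []" using assms(1) by (auto simp: chains_from_def)
  then have eq: "butlast c @ (last c # f) = c @ f"
    by (metis append_butlast_last_id append.assoc append_Cons append_Nil)
  have "sat_chain P le (c @ f)" using assms(2) by (simp add: chains_from_def)
  then have "sat_chain P le (butlast c @ (last c # f))" by (simp only: eq)
  then have "sat_chain P le (last c # f)" by (rule sat_chain_appendD(2)) simp
  then show ?thesis using \<open>c \<noteq> []\<close> by (simp add: maxchain_def last_append)
qed

lemma lequiv_cancel:
  assumes "maxchain P le z x c" "maxchain P le x y d1" "maxchain P le x y d2"
    and "lequiv P le lab z y (c @ tl d1) (c @ tl d2)"
  shows "lequiv P le lab x y d1 d2"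
proof (cases "x = z \<or> x = y")
  case True
  then show ?thesis
  proof
    assume "x = z"
    then have "c = [x]" using assms(1) maxchain_eq_singleton by simp
    moreover have "d1 = x # tl d1" "d2 = x # tl d2" using assms(2,3)
      by (metis list.collapse maxchain_def sat_chain_Nil)+
    ultimately show ?thesis using assms(4) \<open>x = z\<close> by simp
  next
    assume "x = y"
    then show ?thesis using assms(2,3) maxchain_eq_singleton lequiv_refl by metis
  qed
next
  case False
  have "x \<in> P" "y \<in> P" using assms(2) last_in_set[of d1]
    by (auto simp: maxchain_def sat_chain_def)
  moreover have "le x y" using assms(2) le_hd_last by (auto simp: maxchain_def)
  ultimately show ?thesis
    using cancellation[unfolded cancellative_def, rule_format, of z x y c d1 d2]
      assms False z_in_P z_le by metis
qed

lemma exchange_interval_at: "c \<in> C \<Longrightarrow> exchange_interval P le z lab rk (last c)"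
  using exchange_labeling_axioms
  by (auto simp: exchange_interval_def exchange_interval_axioms_def reachable_def chains_from_iff)

lemma ascent_free_extension_exists:
  assumes "c \<in> C" "Y \<in> Q" "c @ f0 \<in> Y"
  shows "\<exists>f. c @ f \<in> Y \<and> ascent_free (L (last c # f))"
proof -
  let ?x = "last c" and ?y = "last (c @ f0)"
  have cf0: "c @ f0 \<in> C" using Q_carrier_chain[OF assms(2,3)] .
  interpret exchange_interval P le z lab rk ?x ?y using exchange_interval_at[OF assms(1)] .
  obtain d where d: "lequiv P le lab ?x ?y (?x # f0) d" "ascent_free (L d)"
    using ascent_free_lequiv_exists maxchain_suffix[OF assms(1) cf0] by blast
  have "c \<noteq> []" using assms(1) by (auto simp: chains_from_def)
  then have split: "butlast c @ (?x # f0) @ [] = c @ f0" by simp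
  have "d \<noteq> []" "hd d = ?x" using d(1) by (auto simp: lequiv_def maxchain_def)
  then have d_split: "butlast c @ d @ [] = c @ tl d"
    using append_tl_eq_butlast_append[OF \<open>c \<noteq> []\<close>] by simp
  have "maxchain P le z ?y (butlast c @ (?x # f0) @ [])"
    unfolding split using cf0 by (simp add: chains_from_iff)
  then have "lequiv P le lab z ?y (butlast c @ (?x # f0) @ []) (butlast c @ d @ [])"
    by (rule lequiv_lift[OF d(1)])
  then have "lequiv P le lab z ?y (c @ f0) (c @ tl d)" unfolding split d_split .
  then have "c @ tl d \<in> Y" using Q_carrier_eq_class[OF assms(2,3)] by (simp add: chain_class_iff)
  moreover have "?x # tl d = d" using \<open>d \<noteq> []\<close> \<open>hd d = ?x\<close> list.collapse by metis
  ultimately show ?thesis using d(2) by (intro exI[of _ "tl d"]) simp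
qed

lemma ascent_free_extension_unique:
  assumes "c \<in> C" "Y \<in> Q" "c @ f1 \<in> Y" "c @ f2 \<in> Y"
    and "ascent_free (L (last c # f1))" "ascent_free (L (last c # f2))"
  shows "f1 = f2"
proof -
  let ?x = "last c" and ?y = "last (c @ f1)"
  have "c @ f2 \<in> cls (c @ f1)" using Q_carrier_eq_class[OF assms(2,3)] assms(4) by simp
  then have lequiv_f: "lequiv P le lab z ?y (c @ tl (?x # f1)) (c @ tl (?x # f2))"
    by (simp add: chain_class_iff)
  then have "last (c @ f2) = ?y" by (simp add: lequiv_def maxchain_def)
  moreover have "c @ f1 \<in> C" "c @ f2 \<in> C" using Q_carrier_chain assms(2-4) by blast+
  ultimately have d: "maxchain P le ?x ?y (?x # f1)" "maxchain P le ?x ?y (?x # f2)"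
    using maxchain_suffix[OF assms(1)] by metis+
  have "maxchain P le z ?x c" using assms(1) by (simp add: chains_from_iff)
  then have "lequiv P le lab ?x ?y (?x # f1) (?x # f2)" using lequiv_cancel d lequiv_f by blast
  then show ?thesis
    using exchange_interval.ascent_free_lequiv_unique[OF exchange_interval_at[OF assms(1)]] assms(5,6)
    by blast
qed

theorem ERstar_labeling_Q: "ERstar_labeling Q leQ (lstar lab)"
  unfolding ERstar_labeling_def
proof (intro ballI impI)
  fix X Y assume X: "X \<in> Q" and Y: "Y \<in> Q" and "leQ X Y"
  obtain c where c: "c \<in> X" using Q_carrier_nonempty[OF X] by blast
  then have "c \<in> C" using Q_carrier_chain[OF X] by blast
  obtain f0 where "c @ f0 \<in> Y" using \<open>leQ X Y\<close> c unfolding Q_le_iff by blast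
  have word: "label_word (lstar lab) (prefix_classes c f) = L (last c # f)" if "c @ f \<in> Y" for f
    using label_word_prefix_classes \<open>c \<in> C\<close> Q_carrier_chain[OF Y that] by blast
  obtain f where f: "c @ f \<in> Y" "ascent_free (L (last c # f))"
    using ascent_free_extension_exists[OF \<open>c \<in> C\<close> Y \<open>c @ f0 \<in> Y\<close>] by blast
  show "\<exists>!Xs. maxchain Q leQ X Y Xs \<and> ascent_free (label_word (lstar lab) Xs)"
  proof
    show "maxchain Q leQ X Y (prefix_classes c f) \<and> ascent_free (label_word (lstar lab) (prefix_classes c f))"
      using maxchain_Q_iff[OF X Y c] f word by auto
  next
    fix Xs assume Xs: "maxchain Q leQ X Y Xs \<and> ascent_free (label_word (lstar lab) Xs)"
    then obtain g where g: "c @ g \<in> Y" "Xs = prefix_classes c g" using maxchain_Q_iff[OF X Y c] by blast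
    then have "g = f"
      using ascent_free_extension_unique[OF \<open>c \<in> C\<close> Y g(1) f(1) _ f(2)] Xs word by simp
    then show "Xs = prefix_classes c f" using g(2) by simp
  qed
qed

end

theorem proposition3p21:
  fixes P :: "'a set" and le :: "'a \<Rightarrow> 'a \<Rightarrow> bool" and z :: 'a
    and lab :: "'a \<Rightarrow> 'a \<Rightarrow> 'l::order"
  assumes "finite P"
    and "is_poset P le"
    and "graded_with_bot P le z"
    and "ER_labeling P le lab"
    and "rank_two_switching P le z lab"
    and "braid_relation P le lab"
    and "cancellative P le lab"
  shows "ERstar_labeling (Q_carrier P le lab z) (Q_le P le lab z) (lstar lab)"
proof -
  obtain rk :: "'a \<Rightarrow> nat" where "rk z = 0" "\<And>x y. pcover P le x y \<Longrightarrow> rk y = Suc (rk x)"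
    and "z \<in> P" "\<And>x. x \<in> P \<Longrightarrow> le z x"
    using assms(3) unfolding graded_with_bot_def by blast
  then interpret exchange_labeling P le z lab rk
    using assms(1,2,5-7) by unfold_locales auto
  show ?thesis by (rule ERstar_labeling_Q)
qed

end
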